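(* Let $K$ be a number field, $0<\alpha<1$, and suppose there is $\mathcal{C}_K>0$ with $|f_1(x,K)|\leq\mathcal{C}_K x^{\alpha}$ for all $x\geq1$. Then for all $x\geq1$, $$|f_2(x,K)|\leq\mathcal{C}_K x^{\alpha}\left(\log x+\frac{1-x^{-\alpha}}{\alpha}\right).$$
   Context: Write $\zeta_K(s)=\sum_{n\geq1}c_K(n)n^{-s}$ for the Dedekind zeta function of $K$ ($c_K(n)$ = number of ideals of $\mathcal{O}_K$ of norm $n$) and $\rho_K$ for its residue at $s=1$. Define $f_1(x,K):=\sum_{n\leq x}c_K(n)-\rho_K x$ and $f_2(x,K):=\sum_{n\leq x}c_K(n)\log n-\rho_K(x\log x-x+1)$. *)

theory Defs
  imports "HOL-Analysis.Analysis" "HOL-Computational_Algebra.Polynomial"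
begin

text \<open>A number field, realised as a subfield of the complex numbers that is
finite-dimensional as a vector space over the rationals.\<close>
definition number_field :: "complex set \<Rightarrow> bool" where
  "number_field K \<longleftrightarrow>
     0 \<in> K \<and> 1 \<in> K \<and>
     (\<forall>x\<in>K. \<forall>y\<in>K. x + y \<in> K \<and> x - y \<in> K \<and> x * y \<in> K) \<and>
     (\<forall>x\<in>K. inverse x \<in> K) \<and>
     (\<exists>B. finite B \<and> B \<subseteq> K \<and>
        (\<forall>x\<in>K. \<exists>q :: complex \<Rightarrow> rat. x = (\<Sum>b\<in>B. of_rat (q b) * b)))"

definition ring_of_integers :: "complex set \<Rightarrow> complex set" where
  "ring_of_integers K = {x \<in> K. algebraic_int x}"

definition is_ideal_of :: "complex set \<Rightarrow> complex set \<Rightarrow> bool" where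
  "is_ideal_of R I \<longleftrightarrow> I \<subseteq> R \<and> 0 \<in> I \<and>
     (\<forall>x\<in>I. \<forall>y\<in>I. x + y \<in> I \<and> - x \<in> I) \<and>
     (\<forall>r\<in>R. \<forall>x\<in>I. r * x \<in> I)"

text \<open>Absolute norm of an ideal: the index of I in R (number of cosets).\<close>
definition ideal_norm :: "complex set \<Rightarrow> complex set \<Rightarrow> nat" where
  "ideal_norm R I = card ((\<lambda>x. (+) x ` I) ` R)"

definition cK :: "complex set \<Rightarrow> nat \<Rightarrow> nat" where
  "cK K n = card {I. is_ideal_of (ring_of_integers K) I \<and> I \<noteq> {0} \<and>
                     ideal_norm (ring_of_integers K) I = n}"

definition dedekind_zeta :: "complex set \<Rightarrow> real \<Rightarrow> real" where
  "dedekind_zeta K s = (\<Sum>n. real (cK K (Suc n)) / real (Suc n) powr s)"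

text \<open>Residue at s = 1 (simple pole), computed as the limit of (s-1) zeta_K(s)
as s tends to 1 from the right.\<close>
definition rhoK :: "complex set \<Rightarrow> real" where
  "rhoK K = Lim (at_right 1) (\<lambda>s. (s - 1) * dedekind_zeta K s)"

definition f1 :: "real \<Rightarrow> complex set \<Rightarrow> real" where
  "f1 x K = (\<Sum>n\<in>{1..nat \<lfloor>x\<rfloor>}. real (cK K n)) - rhoK K * x"

definition f2 :: "real \<Rightarrow> complex set \<Rightarrow> real" where
  "f2 x K = (\<Sum>n\<in>{1..nat \<lfloor>x\<rfloor>}. real (cK K n) * ln (real n))
            - rhoK K * (x * ln x - x + 1)"

end

theory Submission
  imports Defs
begin

text \<open>Write \<open>A(t) = \<Sum>\<^sub>n\<^sub>\<le>\<^sub>t c\<^sub>K(n)\<close>. Abel summation gives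
\<open>f\<^sub>2(x) = f\<^sub>1(x) log x - \<integral>\<^sub>1\<^sup>x f\<^sub>1(t)/t dt\<close>; the first term is at most \<open>C x\<^sup>\<alpha> log x\<close>
and the integral at most \<open>C \<integral>\<^sub>1\<^sup>x t\<^sup>\<alpha>\<^sup>-\<^sup>1 dt = C (x\<^sup>\<alpha> - 1)/\<alpha>\<close>.
Since \<open>A\<close> is constant on each \<open>[k, k+1)\<close>, the integral is never formed: on such
an interval the bound is obtained by comparing antiderivatives, and the intervals
are chained by induction on \<open>\<lfloor>x\<rfloor>\<close>.\<close>

lemma log_linear_increment_le_powr:
  fixes a b A r C \<alpha> :: real
  assumes "0 < a" "a \<le> b" "0 < \<alpha>"
    and bound: "\<And>t. a \<le> t \<Longrightarrow> t < b \<Longrightarrow> A - r * t \<le> C * t powr \<alpha>"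
  shows "A * (ln b - ln a) - r * (b - a) \<le> C * (b powr \<alpha> - a powr \<alpha>) / \<alpha>"
proof -
  define G where "G t = C * t powr \<alpha> / \<alpha> - (A * ln t - r * t)" for t
  have G_deriv: "DERIV G t :> (C * t powr \<alpha> - (A - r * t)) / t" if "0 < t" for t
  proof -
    have "DERIV G t :> C * t powr (\<alpha> - 1) - (A / t - r)"
      unfolding G_def using that assms(3)
      by (auto intro!: derivative_eq_intros simp: field_simps)
    moreover have "C * t powr (\<alpha> - 1) - (A / t - r) = (C * t powr \<alpha> - (A - r * t)) / t"
      using that by (simp add: powr_diff field_simps)
    ultimately show ?thesis by simp
  qed
  have "G a \<le> G b"
  proof (rule DERIV_nonneg_imp_increasing_open[OF assms(2)])
    fix t assume t: "a < t" "t < b"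
    then have "0 \<le> (C * t powr \<alpha> - (A - r * t)) / t"
      using bound[of t] assms(1) by simp
    moreover have "DERIV G t :> (C * t powr \<alpha> - (A - r * t)) / t"
      using G_deriv t assms(1) by simp
    ultimately show "\<exists>y. DERIV G t :> y \<and> 0 \<le> y" by blast
  next
    show "continuous_on {a..b} G"
      using G_deriv assms(1)
      by (intro DERIV_continuous_on[where D = "\<lambda>t. (C * t powr \<alpha> - (A - r * t)) / t"])
         (auto intro: has_field_derivative_at_within)
  qed
  then show ?thesis
    unfolding G_def by (simp add: diff_divide_distrib algebra_simps)
qed

lemma log_linear_increment_abs_le_powr:
  fixes a b A r C \<alpha> :: real
  assumes "0 < a" "a \<le> b" "0 < \<alpha>"
    and bound: "\<And>t. a \<le> t \<Longrightarrow> t < b \<Longrightarrow> \<bar>A - r * t\<bar> \<le> C * t powr \<alpha>"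
  shows "\<bar>A * (ln b - ln a) - r * (b - a)\<bar> \<le> C * (b powr \<alpha> - a powr \<alpha>) / \<alpha>"
proof -
  have "A * (ln b - ln a) - r * (b - a) \<le> C * (b powr \<alpha> - a powr \<alpha>) / \<alpha>"
    by (rule log_linear_increment_le_powr[OF assms(1-3)]) (use bound in force)
  moreover have "(- A) * (ln b - ln a) - (- r) * (b - a) \<le> C * (b powr \<alpha> - a powr \<alpha>) / \<alpha>"
    by (rule log_linear_increment_le_powr[OF assms(1-3)]) (use bound in force)
  ultimately show ?thesis by linarith
qed

lemma abel_remainder_bound_on_unit_interval:
  fixes c :: "nat \<Rightarrow> real" and r C \<alpha> x :: real
  assumes "0 < \<alpha>"
    and bound: "\<And>t. 1 \<le> t \<Longrightarrow> \<bar>(\<Sum>n=1..nat \<lfloor>t\<rfloor>. c n) - r * t\<bar> \<le> C * t powr \<alpha>"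
    and "1 \<le> N" "real N \<le> x" "x \<le> real N + 1"
  shows "\<bar>(\<Sum>n=1..N. c n * ln (real n)) - (\<Sum>n=1..N. c n) * ln x + r * (x - 1)\<bar>
           \<le> C * (x powr \<alpha> - 1) / \<alpha>"
  using assms(3-5)
proof (induction N arbitrary: x rule: nat_induct_at_least)
  case base
  have "\<bar>c 1 * (ln x - ln 1) - r * (x - 1)\<bar> \<le> C * (x powr \<alpha> - 1 powr \<alpha>) / \<alpha>"
  proof (rule log_linear_increment_abs_le_powr)
    fix t assume "1 \<le> t" "t < x"
    then show "\<bar>c 1 - r * t\<bar> \<le> C * t powr \<alpha>"
      using bound[of t] base floor_eq4[of 1 t] by simp
  qed (use base assms(1) in auto)
  then show ?case by (simp add: abs_minus_commute)
next
  case (Suc N)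
  define A where "A = (\<Sum>n=1..N. c n)"
  define S where "S = (\<Sum>n=1..N. c n * ln (real n))"
  have previous: "\<bar>S - A * ln (real N + 1) + r * (real N + 1 - 1)\<bar>
      \<le> C * ((real N + 1) powr \<alpha> - 1) / \<alpha>"
    using Suc.IH[of "real N + 1"] unfolding A_def S_def by simp
  have last: "\<bar>(A + c (Suc N)) * (ln x - ln (real (Suc N))) - r * (x - real (Suc N))\<bar>
      \<le> C * (x powr \<alpha> - real (Suc N) powr \<alpha>) / \<alpha>"
  proof (rule log_linear_increment_abs_le_powr)
    fix t assume "real (Suc N) \<le> t" "t < x"
    then show "\<bar>A + c (Suc N) - r * t\<bar> \<le> C * t powr \<alpha>"
      using bound[of t] Suc.prems floor_eq4[of "Suc N" t] unfolding A_def by simp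
  qed (use Suc.prems assms(1) in auto)
  have "\<bar>S + c (Suc N) * ln (real (Suc N)) - (A + c (Suc N)) * ln x + r * (x - 1)\<bar>
      \<le> C * ((real N + 1) powr \<alpha> - 1) / \<alpha> + C * (x powr \<alpha> - real (Suc N) powr \<alpha>) / \<alpha>"
    using previous last by (simp add: algebra_simps)
  also have "\<dots> = C * (x powr \<alpha> - 1) / \<alpha>"
    by (simp add: add_divide_distrib[symmetric] algebra_simps)
  finally show ?case unfolding A_def S_def by simp
qed

lemma abel_remainder_bound:
  fixes c :: "nat \<Rightarrow> real" and r C \<alpha> x :: real
  assumes "0 < \<alpha>"
    and "\<And>t. 1 \<le> t \<Longrightarrow> \<bar>(\<Sum>n=1..nat \<lfloor>t\<rfloor>. c n) - r * t\<bar> \<le> C * t powr \<alpha>"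
    and "1 \<le> x"
  shows "\<bar>(\<Sum>n=1..nat \<lfloor>x\<rfloor>. c n * ln (real n)) - (\<Sum>n=1..nat \<lfloor>x\<rfloor>. c n) * ln x + r * (x - 1)\<bar>
           \<le> C * (x powr \<alpha> - 1) / \<alpha>"
  using assms by (intro abel_remainder_bound_on_unit_interval) (auto simp: le_nat_floor)

theorem lemma2:
  fixes K :: "complex set" and \<alpha> C :: real
  assumes "number_field K"
    and "0 < \<alpha>" and "\<alpha> < 1"
    and "C > 0"
    and "\<forall>x\<ge>1. \<bar>f1 x K\<bar> \<le> C * x powr \<alpha>"
  shows "\<forall>x\<ge>1. \<bar>f2 x K\<bar> \<le> C * x powr \<alpha> * (ln x + (1 - x powr (- \<alpha>)) / \<alpha>)"
proof (intro allI impI)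
  fix x :: real assume x: "1 \<le> x"
  define c where "c n = real (cK K n)" for n
  define R where "R = (\<Sum>n=1..nat \<lfloor>x\<rfloor>. c n * ln (real n))
                      - (\<Sum>n=1..nat \<lfloor>x\<rfloor>. c n) * ln x + rhoK K * (x - 1)"
  have R_bound: "\<bar>R\<bar> \<le> C * (x powr \<alpha> - 1) / \<alpha>"
    unfolding R_def using abel_remainder_bound[OF assms(2) _ x] assms(5)
    unfolding f1_def c_def by simp
  have "f2 x K = f1 x K * ln x + R"
    unfolding f2_def f1_def R_def c_def by (simp add: algebra_simps)
  moreover have "\<bar>f1 x K * ln x\<bar> \<le> C * x powr \<alpha> * ln x"
    using assms(5) x by (simp add: abs_mult mult_right_mono)
  ultimately have "\<bar>f2 x K\<bar> \<le> C * x powr \<alpha> * ln x + C * (x powr \<alpha> - 1) / \<alpha>"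
    using R_bound by linarith
  also have "\<dots> = C * x powr \<alpha> * (ln x + (1 - x powr (- \<alpha>)) / \<alpha>)"
    using x assms(2) by (simp add: powr_minus field_simps)
  finally show "\<bar>f2 x K\<bar> \<le> C * x powr \<alpha> * (ln x + (1 - x powr (- \<alpha>)) / \<alpha>)" .
qed

end
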